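(* Let $0<\alpha<1$ and let $\lambda>0$, $k>0$, $m>0$, $h>0$, $C<D$ (with $D>0$) be constants. Let $$K(\eta)=\eta\left[1-W\!\left(-\eta,-\tfrac{\alpha}{2},1\right)+\frac{m}{h\lambda\Gamma(1-\alpha/2)}\right]\frac{1}{M_{\alpha/2}(\eta)},\quad \eta>0,$$ and let $\tilde\eta$ be the unique positive solution of $K(\eta)=\frac{k}{\lambda^2}\frac{\Gamma(1-\frac{\alpha}{2})}{\Gamma(1+\frac{\alpha}{2})}(D-C)$. Set $$q=\frac{(D-C)\,h}{m+h\lambda\Gamma(1-\frac{\alpha}{2})\left[1-W(-\tilde\eta,-\frac{\alpha}{2},1)\right]}.$$ Consider problem (P2): find $u,s$ with $D^{\alpha}_t u=\lambda^2u_{xx}$ for $0<x<s(t)$, $t>0$; $u_x(0,t)=-\frac{q}{t^{\alpha/2}}$; $u(s(t),t)=C$; $D^{\alpha}s(t)=-k u_x(s(t),t)$ for $t>0$; $s(0)=0$. Consider problem (P3): find $u,s$ with $D^{\alpha}_t u=\lambda^2u_{xx}$ for $0<x<s(t)$, $t>0$; $m\,u_x(0,t)=\frac{h}{t^{\alpha/2}}(u(0,t)-D)$; $u(s(t),t)=C$; $D^{\alpha}s(t)=-k u_x(s(t),t)$ for $t>0$; $s(0)=0$ (with the same $C$). Then problems (P2) and (P3) are equivalent: the solution of (P2) $$u_2(x,t)=C+q\lambda\Gamma(1-\tfrac{\alpha}{2})\left[1-W(-\tilde\mu,-\tfrac{\alpha}{2},1)\right]-q\lambda\Gamma(1-\tfrac{\alpha}{2})\left[1-W\!\left(-\frac{x}{\lambda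 t^{\alpha/2}},-\frac{\alpha}{2},1\right)\right],\quad s_2(t)=\lambda\tilde\mu t^{\alpha/2},$$ where $\tilde\mu$ is the unique positive solution of $\frac{\mu}{M_{\alpha/2}(\mu)}=\frac{kq}{\lambda}\frac{\Gamma(1-\frac{\alpha}{2})^2}{\Gamma(1+\frac{\alpha}{2})}$, coincides with the solution of (P3) $$u_3(x,t)=D-\frac{(D-C)\left[1-W\!\left(-\frac{x}{\lambda t^{\alpha/2}},-\frac{\alpha}{2},1\right)+\frac{m}{h\lambda\Gamma(1-\alpha/2)}\right]}{1-W\!\left(-\tilde\eta,-\frac{\alpha}{2},1\right)+\frac{m}{h\lambda\Gamma(1-\alpha/2)}},\quad s_3(t)=\lambda\tilde\eta t^{\alpha/2};$$ that is, $\tilde\mu=\tilde\eta$, $s_2=s_3$ and $u_2=u_3$.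
   Context: For $0<\alpha<1$, the Caputo fractional derivative of a differentiable $f$ is $D^{\alpha}f(t)=\frac{1}{\Gamma(1-\alpha)}\int_0^t (t-\tau)^{-\alpha}f'(\tau)\,d\tau$; $D^{\alpha}_t u(x,t)$ denotes it in the variable $t$. The Wright function is $W(z,a,b)=\sum_{n\ge0}\frac{z^n}{n!\,\Gamma(an+b)}$ ($a>-1$), and the Mainardi function is $M_\nu(z)=W(-z,-\nu,1-\nu)$. *)

theory Defs
  imports "HOL-Analysis.Analysis"
begin

text \<open>Wright function W(z,a,b) = sum_n z^n / (n! Gamma(a n + b)); 1/Gamma is rGamma
  (which is 0 at the poles of Gamma, the usual convention).\<close>
definition wright :: "real \<Rightarrow> real \<Rightarrow> real \<Rightarrow> real" where
  "wright z a b = (\<Sum>n. z ^ n / fact n * rGamma (a * real n + b))"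

definition mainardi :: "real \<Rightarrow> real \<Rightarrow> real" where
  "mainardi \<nu> z = wright (- z) (- \<nu>) (1 - \<nu>)"

definition Kfun :: "real \<Rightarrow> real \<Rightarrow> real \<Rightarrow> real \<Rightarrow> real \<Rightarrow> real" where
  "Kfun \<alpha> lam m h \<eta> =
     \<eta> * (1 - wright (- \<eta>) (- \<alpha>/2) 1 + m / (h * lam * Gamma (1 - \<alpha>/2)))
       * (1 / mainardi (\<alpha>/2) \<eta>)"

definition q_P2 :: "real \<Rightarrow> real \<Rightarrow> real \<Rightarrow> real \<Rightarrow> real \<Rightarrow> real \<Rightarrow> real \<Rightarrow> real" where
  "q_P2 \<alpha> lam m h C D \<eta> =
     (D - C) * h / (m + h * lam * Gamma (1 - \<alpha>/2) * (1 - wright (- \<eta>) (- \<alpha>/2) 1))"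

definition u2 :: "real \<Rightarrow> real \<Rightarrow> real \<Rightarrow> real \<Rightarrow> real \<Rightarrow> real \<Rightarrow> real \<Rightarrow> real" where
  "u2 \<alpha> lam q C \<mu> x t =
     C + q * lam * Gamma (1 - \<alpha>/2) * (1 - wright (- \<mu>) (- \<alpha>/2) 1)
       - q * lam * Gamma (1 - \<alpha>/2) * (1 - wright (- (x / (lam * t powr (\<alpha>/2)))) (- \<alpha>/2) 1)"

definition s2 :: "real \<Rightarrow> real \<Rightarrow> real \<Rightarrow> real \<Rightarrow> real" where
  "s2 \<alpha> lam \<mu> t = lam * \<mu> * t powr (\<alpha>/2)"

definition u3 :: "real \<Rightarrow> real \<Rightarrow> real \<Rightarrow> real \<Rightarrow> real \<Rightarrow> real \<Rightarrow> real \<Rightarrow> real \<Rightarrow> real \<Rightarrow> real" where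
  "u3 \<alpha> lam m h C D \<eta> x t =
     D - (D - C) * (1 - wright (- (x / (lam * t powr (\<alpha>/2)))) (- \<alpha>/2) 1
                     + m / (h * lam * Gamma (1 - \<alpha>/2)))
         / (1 - wright (- \<eta>) (- \<alpha>/2) 1 + m / (h * lam * Gamma (1 - \<alpha>/2)))"

definition s3 :: "real \<Rightarrow> real \<Rightarrow> real \<Rightarrow> real \<Rightarrow> real" where
  "s3 \<alpha> lam \<eta> t = lam * \<eta> * t powr (\<alpha>/2)"

end

theory Submission
  imports Defs
begin

text \<open>With \<open>A(\<eta>) = 1 - W(-\<eta>,-\<alpha>/2,1) + m/(h\<lambda>\<Gamma>(1-\<alpha>/2))\<close> (\<open>u3_denom\<close>), the flux constant of (P2) is
  \<open>q = (D - C)/(\<lambda>\<Gamma>(1-\<alpha>/2) A(\<tilde>\<eta>))\<close>. Substituting this into the equation \<open>K(\<tilde>\<eta>) = \<dots>\<close>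
  shows that \<open>\<tilde>\<eta>\<close> solves the defining equation of \<open>\<tilde>\<mu>\<close>, so \<open>\<tilde>\<mu> = \<tilde>\<eta>\<close> by uniqueness;
  with equal parameters the two explicit solutions agree by a purely algebraic identity.\<close>

definition u3_denom :: "real \<Rightarrow> real \<Rightarrow> real \<Rightarrow> real \<Rightarrow> real \<Rightarrow> real" where
  "u3_denom \<alpha> lam m h \<eta> = 1 - wright (- \<eta>) (- \<alpha>/2) 1 + m / (h * lam * Gamma (1 - \<alpha>/2))"

lemma Kfun_eq_u3_denom:
  "Kfun \<alpha> lam m h \<eta> = \<eta> * u3_denom \<alpha> lam m h \<eta> / mainardi (\<alpha>/2) \<eta>"
  unfolding Kfun_def u3_denom_def by simp

lemma q_P2_eq_u3_denom:
  assumes "lam \<noteq> 0" "h \<noteq> 0" "Gamma (1 - \<alpha>/2) \<noteq> 0"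
  shows "q_P2 \<alpha> lam m h C D \<eta> = (D - C) / (lam * Gamma (1 - \<alpha>/2) * u3_denom \<alpha> lam m h \<eta>)"
proof -
  have "m + h * lam * Gamma (1 - \<alpha>/2) * (1 - wright (- \<eta>) (- \<alpha>/2) 1)
      = h * (lam * Gamma (1 - \<alpha>/2) * u3_denom \<alpha> lam m h \<eta>)"
    unfolding u3_denom_def using assms by (simp add: field_simps)
  then show ?thesis
    unfolding q_P2_def using assms(2) by simp
qed

lemma Kfun_solution_solves_mainardi_equation:
  assumes "lam \<noteq> 0" "h \<noteq> 0" "Gamma (1 - \<alpha>/2) \<noteq> 0"
    and "u3_denom \<alpha> lam m h \<eta> \<noteq> 0"
    and "Kfun \<alpha> lam m h \<eta> = k / lam^2 * Gamma (1 - \<alpha>/2) / Gamma (1 + \<alpha>/2) * (D - C)"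
  shows "\<eta> / mainardi (\<alpha>/2) \<eta>
       = k * q_P2 \<alpha> lam m h C D \<eta> / lam * Gamma (1 - \<alpha>/2)^2 / Gamma (1 + \<alpha>/2)"
proof -
  have "\<eta> / mainardi (\<alpha>/2) \<eta> = Kfun \<alpha> lam m h \<eta> / u3_denom \<alpha> lam m h \<eta>"
    unfolding Kfun_eq_u3_denom using assms(4) by simp
  also have "\<dots> = k / lam^2 * Gamma (1 - \<alpha>/2) / Gamma (1 + \<alpha>/2) * (D - C) / u3_denom \<alpha> lam m h \<eta>"
    unfolding assms(5) ..
  also have "\<dots> = k * ((D - C) / (lam * Gamma (1 - \<alpha>/2) * u3_denom \<alpha> lam m h \<eta>)) / lam
                    * Gamma (1 - \<alpha>/2)^2 / Gamma (1 + \<alpha>/2)"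
    using assms(1,3,4)
    by (cases "Gamma (1 + \<alpha>/2) = 0") (simp_all add: field_simps power2_eq_square)
  finally show ?thesis
    unfolding q_P2_eq_u3_denom[OF assms(1-3)] .
qed

lemma u2_eq_u3:
  assumes "lam \<noteq> 0" "h \<noteq> 0" "Gamma (1 - \<alpha>/2) \<noteq> 0" "u3_denom \<alpha> lam m h \<eta> \<noteq> 0"
  shows "u2 \<alpha> lam (q_P2 \<alpha> lam m h C D \<eta>) C \<eta> x t = u3 \<alpha> lam m h C D \<eta> x t"
proof -
  define A where "A = u3_denom \<alpha> lam m h \<eta>"
  define w where "w = wright (- \<eta>) (- \<alpha>/2) 1"
  define Wx where "Wx = wright (- (x / (lam * t powr (\<alpha>/2)))) (- \<alpha>/2) 1"
  define r where "r = m / (h * lam * Gamma (1 - \<alpha>/2))"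
  have "A = 1 - w + r"
    unfolding A_def w_def r_def u3_denom_def ..
  then have "u2 \<alpha> lam (q_P2 \<alpha> lam m h C D \<eta>) C \<eta> x t = C + (D - C) / A * (1 - w) - (D - C) / A * (1 - Wx)"
    unfolding u2_def q_P2_eq_u3_denom[OF assms(1-3)] A_def[symmetric] w_def[symmetric] Wx_def[symmetric]
    using assms(1,3) by simp
  also have "\<dots> = D - (D - C) * (1 - Wx + r) / A"
  proof -
    have "r = A - 1 + w" using \<open>A = 1 - w + r\<close> by simp
    then show ?thesis using assms(4) unfolding A_def[symmetric] by (simp add: field_simps)
  qed
  also have "\<dots> = u3 \<alpha> lam m h C D \<eta> x t"
    unfolding u3_def A_def u3_denom_def Wx_def r_def by simp
  finally show ?thesis .
qed

theorem mainTheorem3: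
  fixes \<alpha> lam k m h C D \<eta>t \<mu>t :: real
  assumes "0 < \<alpha>" "\<alpha> < 1" "0 < lam" "0 < k" "0 < m" "0 < h" "C < D" "0 < D"
    and eta_sol: "0 < \<eta>t \<and> Kfun \<alpha> lam m h \<eta>t
                    = k / lam^2 * Gamma (1 - \<alpha>/2) / Gamma (1 + \<alpha>/2) * (D - C)"
    and eta_uniq: "\<And>\<eta>. 0 < \<eta> \<Longrightarrow> Kfun \<alpha> lam m h \<eta>
                    = k / lam^2 * Gamma (1 - \<alpha>/2) / Gamma (1 + \<alpha>/2) * (D - C) \<Longrightarrow> \<eta> = \<eta>t"
    and mu_sol: "0 < \<mu>t \<and> \<mu>t / mainardi (\<alpha>/2) \<mu>t
                    = k * q_P2 \<alpha> lam m h C D \<eta>t / lam * Gamma (1 - \<alpha>/2)^2 / Gamma (1 + \<alpha>/2)"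
    and mu_uniq: "\<And>\<mu>. 0 < \<mu> \<Longrightarrow> \<mu> / mainardi (\<alpha>/2) \<mu>
                    = k * q_P2 \<alpha> lam m h C D \<eta>t / lam * Gamma (1 - \<alpha>/2)^2 / Gamma (1 + \<alpha>/2)
                    \<Longrightarrow> \<mu> = \<mu>t"
  shows "\<mu>t = \<eta>t
       \<and> (\<forall>t>0. s2 \<alpha> lam \<mu>t t = s3 \<alpha> lam \<eta>t t)
       \<and> (\<forall>t>0. \<forall>x. 0 < x \<and> x < s2 \<alpha> lam \<mu>t t \<longrightarrow>
             u2 \<alpha> lam (q_P2 \<alpha> lam m h C D \<eta>t) C \<mu>t x t = u3 \<alpha> lam m h C D \<eta>t x t)"
proof -
  have Gamma_pos: "Gamma (1 - \<alpha>/2) > 0" "Gamma (1 + \<alpha>/2) > 0"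
    using assms(1,2) by (simp_all add: Gamma_real_pos)
  have "Kfun \<alpha> lam m h \<eta>t \<noteq> 0"
    using eta_sol Gamma_pos assms(3,4,7) by simp
  then have denom: "u3_denom \<alpha> lam m h \<eta>t \<noteq> 0"
    unfolding Kfun_eq_u3_denom by auto
  have nonzero: "lam \<noteq> 0" "h \<noteq> 0" "Gamma (1 - \<alpha>/2) \<noteq> 0"
    using assms(3,6) Gamma_pos by simp_all
  have "\<mu>t = \<eta>t"
    using mu_uniq eta_sol Kfun_solution_solves_mainardi_equation[OF nonzero denom] by blast
  then show ?thesis
    using u2_eq_u3[OF nonzero denom] unfolding s2_def s3_def by simp
qed

end
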